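(* Let $\mathcal M_t$, $t\ge0$, be the moment generating function of the free Jacobi process with parameters $\lambda=1$, $\theta=1/2$ and initial spectral distribution $\delta_1$, i.e. the solution of $$\partial_t\mathcal M_t(z)=-\frac z2\,\partial_z\big\{(1-z)\mathcal M_t(z)^2\big\},\qquad \mathcal M_0(z)=\frac1{1-z},$$ and let $\mathcal S_t^{(1,1/2)}$ be its $S$ transform (so $\mathcal S_0^{(1,1/2)}\equiv1$). For $t\ge0$ define, near $u=1$, $\xi_{2t}(u)=\frac{u-1}{u+1}e^{ut}$ and, near $z=0$ (with the principal branch of the square root), $$\kappa_t(z)=\frac{(1+\sqrt{1+z})\,\xi_{2t}(\sqrt{1+z})+(\sqrt{1+z}-1)}{1-\xi_{2t}(\sqrt{1+z})}.$$ Then $\kappa_t(0)=0$, $\kappa_t$ is locally invertible around $0$, and locally around $z=0$ $$\mathcal S_t^{(1,1/2)}(z)=\frac{z^2+2z-\kappa_t^{-1}(z)}{z(1+z)}=\mathcal S_\infty^{(1,1/2)}(z)-\frac{\kappa_t^{-1}(z)}{z(1+z)},\qquad \mathcal S_\infty^{(1,1/2)}(z)=\frac{z+2}{z+1}.$$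
   Context: The $S$ transform of a moment generating function $\mathcal M$ with nonzero first moment is $\mathcal S(z)=\frac{1+z}{z}\eta(z)$, where $\eta$ is the local inverse near $0$ of $\mathcal M-1$. The function $\xi_{2t}$ is the inverse, in a neighbourhood of $1$, of the Herglotz transform of the spectral distribution of the free unitary Brownian motion at time $2t$. *)

theory Defs
  imports "HOL-Analysis.Analysis"
begin

text \<open>xi_{2t}(u) = (u-1)/(u+1) e^{ut}, the inverse near 1 of the Herglotz transform
  of the free unitary Brownian motion at time 2t.\<close>
definition xi2 :: "real \<Rightarrow> complex \<Rightarrow> complex" where
  "xi2 t u = (u - 1) / (u + 1) * exp (u * complex_of_real t)"

definition kappa :: "real \<Rightarrow> complex \<Rightarrow> complex" where
  "kappa t z = ((1 + csqrt (1 + z)) * xi2 t (csqrt (1 + z)) + (csqrt (1 + z) - 1))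
               / (1 - xi2 t (csqrt (1 + z)))"

definition local_inverse_at0 :: "(complex \<Rightarrow> complex) \<Rightarrow> (complex \<Rightarrow> complex) \<Rightarrow> bool" where
  "local_inverse_at0 f g \<longleftrightarrow>
     (\<exists>U V. open U \<and> open V \<and> 0 \<in> U \<and> 0 \<in> V \<and> f ` U = V \<and>
            (\<forall>z\<in>U. g (f z) = z) \<and> (\<forall>w\<in>V. g w \<in> U \<and> f (g w) = w))"

text \<open>S transform built from a local inverse eta of (M - 1): S(z) = (1+z)/z * eta(z).\<close>
definition S_transform :: "(complex \<Rightarrow> complex) \<Rightarrow> complex \<Rightarrow> complex" where
  "S_transform eta z = (1 + z) / z * eta z"

end

theory Submission
  imports Defs "HOL-Complex_Analysis.Complex_Analysis"
begin

(* Write U t z = sqrt(1 - z) M_t(z).  Its square is 1 + ((1 - z) M_t(z)^2 - 1), so near z = 0 it is the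
   square root occurring in kappa_t at the point (1 - z) M_t(z)^2 - 1, and the equation for M_t becomes the
   Burgers-type equation  d_t U = - z sqrt(1 - z) U d_z U.  From this, the defect
   (U - 1) e^(U t) - xi_init(z) (U + 1), where xi_init(z) = (1 - sqrt(1 - z)) / (1 + sqrt(1 - z)) is the
   value of xi_{2t}(U) at t = 0, solves the linear transport equation
   d_t D = U D - z sqrt(1 - z) U d_z D  with zero initial data.  For such an equation the n-th Taylor
   coefficient of D at 0 solves a linear ODE once the lower ones vanish, so all of them vanish and
   D = 0.  Hence xi_{2t}(U t z) = xi_init(z), which solved for M_t gives
   M_t(z) - 1 = kappa_t((1 - z) M_t(z)^2 - 1) near 0.  Evaluating at z = eta(w), where eta inverts
   M_t - 1, gives kappa_t^{-1}(w) = (1 - eta(w)) (1 + w)^2 - 1, and the formula for the S transform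
   is a rearrangement of this. *)

section \<open>Cauchy integrals depending on a parameter\<close>

lemma norm_circlepath_0 [simp]: "0 \<le> r \<Longrightarrow> norm (circlepath 0 r x) = r"
  by (simp add: circlepath norm_mult)

lemma continuous_on_circlepath_0 [continuous_intros]:
  "continuous_on S f \<Longrightarrow> continuous_on S (\<lambda>x. circlepath 0 r (f x))"
  unfolding circlepath by (intro continuous_intros)

lemma higher_deriv_eq_integral_circlepath:
  fixes f :: "complex \<Rightarrow> complex"
  assumes hol: "f holomorphic_on ball 0 R" and r: "0 < r" "r < R" and w: "norm w < r"
  shows "(deriv ^^ k) f w = fact k * integral {0..1}
           (\<lambda>x. f (circlepath 0 r x) / (circlepath 0 r x - w) ^ Suc k * circlepath 0 r x)"
proof -
  have "continuous_on (cball 0 r) f"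
    using holomorphic_on_imp_continuous_on [OF hol] by (rule continuous_on_subset) (use r in auto)
  moreover have "f holomorphic_on ball 0 r"
    by (rule holomorphic_on_subset [OF hol]) (use r in auto)
  ultimately have "((\<lambda>u. f u / (u - w) ^ Suc k) has_contour_integral
                     (2 * pi * \<i>) / fact k * (deriv ^^ k) f w) (circlepath 0 r)"
    using w by (intro Cauchy_has_contour_integral_higher_derivative_circlepath) auto
  then have "(2 * pi * \<i>) / fact k * (deriv ^^ k) f w
               = contour_integral (circlepath 0 r) (\<lambda>u. f u / (u - w) ^ Suc k)"
    by (rule contour_integral_unique [symmetric])
  also have "\<dots> = (2 * pi * \<i>) * integral {0..1}
           (\<lambda>x. f (circlepath 0 r x) / (circlepath 0 r x - w) ^ Suc k * circlepath 0 r x)"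
    unfolding contour_integral_integral vector_derivative_circlepath
    by (subst integral_mult_right [symmetric]) (simp add: circlepath algebra_simps)
  finally show ?thesis by (simp add: field_simps)
qed

lemma continuous_on_snd_compose:
  "continuous_on S f \<Longrightarrow> continuous_on (T \<times> S) (\<lambda>(s, z). f z)"
  unfolding case_prod_beta by (erule continuous_on_compose2) (auto intro: continuous_intros)

lemma continuous_on_deriv_param:
  fixes F :: "'a::topological_space \<Rightarrow> complex \<Rightarrow> complex"
  assumes hol: "\<And>s. s \<in> T \<Longrightarrow> F s holomorphic_on ball 0 R"
    and cont: "continuous_on (T \<times> ball 0 R) (\<lambda>(s, z). F s z)"
    and r: "0 < r" "r < R"
  shows "continuous_on (T \<times> ball 0 r) (\<lambda>(s, z). deriv (F s) z)"
proof -
  define \<rho> where "\<rho> = (r + R) / 2"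
  have \<rho>: "0 < \<rho>" "r < \<rho>" "\<rho> < R" using r by (auto simp: \<rho>_def)
  let ?\<gamma> = "circlepath 0 \<rho>"
  let ?integrand = "\<lambda>p x. F (fst p) (?\<gamma> x) / (?\<gamma> x - snd p) ^ 2 * ?\<gamma> x"
  have "continuous_on ((T \<times> ball 0 r) \<times> cbox 0 1)
          (\<lambda>q. (\<lambda>(s, z). F s z) (fst (fst q), ?\<gamma> (snd q)))"
    by (rule continuous_on_compose2 [OF cont]) (use \<rho> in \<open>auto intro!: continuous_intros\<close>)
  moreover have "?\<gamma> x \<noteq> z" if "z \<in> ball 0 r" for x z
    using that \<rho> norm_circlepath_0 [of \<rho> x] by auto
  ultimately have "continuous_on ((T \<times> ball 0 r) \<times> cbox 0 1) (\<lambda>(p, x). ?integrand p x)"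
    unfolding case_prod_beta by (intro continuous_intros) auto
  then have "continuous_on (T \<times> ball 0 r) (\<lambda>p. integral (cbox 0 1) (?integrand p))"
    by (rule integral_continuous_on_param)
  moreover have Cauchy: "deriv (F s) z = integral (cbox 0 1) (?integrand (s, z))"
    if "s \<in> T" "z \<in> ball 0 r" for s z
    using higher_deriv_eq_integral_circlepath [OF hol [OF that(1)] \<rho>(1,3), of z 1] that \<rho>
    by (simp add: numeral_2_eq_2)
  ultimately show ?thesis
    by (auto intro: continuous_on_eq simp: Cauchy)
qed

lemma has_vector_derivative_higher_deriv_0_param:
  fixes P A :: "real \<Rightarrow> complex \<Rightarrow> complex"
  assumes holP: "\<And>s. s \<in> T \<Longrightarrow> P s holomorphic_on ball 0 R"
    and holA: "\<And>s. s \<in> T \<Longrightarrow> A s holomorphic_on ball 0 R"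
    and der: "\<And>s z. s \<in> T \<Longrightarrow> z \<in> ball 0 R \<Longrightarrow>
                ((\<lambda>r. P r z) has_vector_derivative A s z) (at s within T)"
    and contA: "continuous_on (T \<times> ball 0 r) (\<lambda>(s, z). A s z)"
    and r: "0 < r" "r \<le> R" and T: "convex T" "s \<in> T"
  shows "((\<lambda>s. (deriv ^^ n) (P s) 0) has_vector_derivative (deriv ^^ n) (A s) 0) (at s within T)"
proof -
  let ?\<gamma> = "circlepath 0 (r / 2)"
  define f where "f = (\<lambda>s x. P s (?\<gamma> x) / ?\<gamma> x ^ Suc n * ?\<gamma> x)"
  define fA where "fA = (\<lambda>s x. A s (?\<gamma> x) / ?\<gamma> x ^ Suc n * ?\<gamma> x)"
  have \<gamma>_norm: "norm (?\<gamma> x) = r / 2" for x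
    using r by simp
  have \<gamma>_in: "?\<gamma> x \<in> ball 0 r" "?\<gamma> x \<in> ball 0 R" for x
    using \<gamma>_norm [of x] r by simp_all
  have \<gamma>_nz: "?\<gamma> x \<noteq> 0" for x
    using r by (simp add: circlepath)
  have Cauchy_P: "(deriv ^^ n) (P s) 0 = fact n * integral (cbox 0 1) (f s)" if "s \<in> T" for s
    unfolding f_def cbox_interval
    using higher_deriv_eq_integral_circlepath [OF holP [OF that], of "r / 2" 0 n] r by simp
  have Cauchy_A: "(deriv ^^ n) (A s) 0 = fact n * integral (cbox 0 1) (fA s)"
    unfolding fA_def cbox_interval
    using higher_deriv_eq_integral_circlepath [OF holA [OF T(2)], of "r / 2" 0 n] r by simp
  have "((\<lambda>s. integral (cbox 0 1) (f s)) has_vector_derivative integral (cbox 0 1) (fA s))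
          (at s within T)"
  proof (rule leibniz_rule_vector_derivative [OF _ _ _ T(2,1)])
    fix s x assume "s \<in> T"
    then show "((\<lambda>s. f s x) has_vector_derivative fA s x) (at s within T)"
      unfolding f_def fA_def using der \<gamma>_in by (intro derivative_intros) auto
  next
    fix s assume "s \<in> T"
    then have "continuous_on (ball 0 R) (P s)"
      by (intro holomorphic_on_imp_continuous_on holP)
    then have "continuous_on (cbox 0 1) (\<lambda>x. P s (?\<gamma> x))"
      by (rule continuous_on_compose2) (use \<gamma>_in in \<open>auto intro!: continuous_intros\<close>)
    then show "f s integrable_on cbox 0 1"
      unfolding f_def using \<gamma>_nz by (intro integrable_continuous continuous_intros) auto
  next
    have "continuous_on (T \<times> cbox 0 1) (\<lambda>q. (\<lambda>(s, z). A s z) (fst q, ?\<gamma> (snd q)))"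
      by (rule continuous_on_compose2 [OF contA]) (use \<gamma>_in in \<open>auto intro!: continuous_intros\<close>)
    then show "continuous_on (T \<times> cbox 0 1) (\<lambda>(s, x). fA s x)"
      unfolding fA_def case_prod_beta using \<gamma>_nz by (intro continuous_intros) auto
  qed
  then have "((\<lambda>s. fact n * integral (cbox 0 1) (f s)) has_vector_derivative
               fact n * integral (cbox 0 1) (fA s)) (at s within T)"
    by (rule has_vector_derivative_mult_right)
  then show ?thesis
    unfolding Cauchy_A by (rule has_vector_derivative_transform [rotated 2]) (use T Cauchy_P in auto)
qed

section \<open>Uniqueness for a linear transport equation\<close>

lemma higher_deriv_mult_id_0:
  fixes G :: "complex \<Rightarrow> complex"
  assumes "G holomorphic_on S" "open S" "0 \<in> S"
  shows "(deriv ^^ n) (\<lambda>z. z * G z) 0 = of_nat n * (deriv ^^ (n - 1)) G 0"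
proof -
  have "(deriv ^^ n) (\<lambda>z. z * G z) 0 =
          (\<Sum>i = 0..n. of_nat (n choose i) * (deriv ^^ i) (\<lambda>z. z) 0 * (deriv ^^ (n - i)) G 0)"
    using assms by (intro higher_deriv_mult) (auto intro: holomorphic_intros)
  also have "\<dots> = (\<Sum>i = 0..n. if i = 1 then of_nat n * (deriv ^^ (n - 1)) G 0 else 0)"
    by (rule sum.cong) auto
  also have "\<dots> = of_nat n * (deriv ^^ (n - 1)) G 0"
    by (subst sum.delta) auto
  finally show ?thesis .
qed

lemma higher_deriv_transport_operator_0:
  fixes B U P :: "complex \<Rightarrow> complex"
  assumes hol: "B holomorphic_on S" "U holomorphic_on S" "P holomorphic_on S"
    and S: "open S" "0 \<in> S"
    and lower: "\<And>k. k < n \<Longrightarrow> (deriv ^^ k) P 0 = 0"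
  shows "(deriv ^^ n) (\<lambda>z. U z * P z - z * (B z * deriv P z)) 0
           = (U 0 - of_nat n * B 0) * (deriv ^^ n) P 0"
proof -
  have hol_dP: "deriv P holomorphic_on S"
    using hol(3) S(1) by (rule holomorphic_deriv)
  have hol_BdP: "(\<lambda>z. B z * deriv P z) holomorphic_on S"
    using hol(1) hol_dP by (rule holomorphic_on_mult)
  have transport: "(deriv ^^ n) (\<lambda>z. z * (B z * deriv P z)) 0 = of_nat n * B 0 * (deriv ^^ n) P 0"
  proof (cases n)
    case (Suc m)
    have "(deriv ^^ m) (\<lambda>z. B z * deriv P z) 0 =
            (\<Sum>i = 0..m. of_nat (m choose i) * (deriv ^^ i) B 0 * (deriv ^^ (m - i)) (deriv P) 0)"
      using hol(1) hol_dP S by (rule higher_deriv_mult)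
    also have "\<dots> = (\<Sum>i = 0..m. if i = 0 then B 0 * (deriv ^^ n) P 0 else 0)"
      using lower [of "Suc (m - _)"] Suc
      by (intro sum.cong) (auto simp flip: funpow_Suc_right simp: funpow_swap1)
    finally have "(deriv ^^ m) (\<lambda>z. B z * deriv P z) 0 = B 0 * (deriv ^^ n) P 0"
      by (simp add: sum.delta del: funpow.simps)
    then show ?thesis
      using higher_deriv_mult_id_0 [OF hol_BdP S, of n] Suc by (simp del: funpow.simps)
  qed simp
  have source: "(deriv ^^ n) (\<lambda>z. U z * P z) 0 = U 0 * (deriv ^^ n) P 0"
  proof -
    have "(deriv ^^ n) (\<lambda>z. U z * P z) 0 =
            (\<Sum>i = 0..n. of_nat (n choose i) * (deriv ^^ i) U 0 * (deriv ^^ (n - i)) P 0)"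
      using hol(2,3) S by (rule higher_deriv_mult)
    also have "\<dots> = (\<Sum>i = 0..n. if i = 0 then U 0 * (deriv ^^ n) P 0 else 0)"
      using lower [of "n - _"] by (intro sum.cong) auto
    finally show ?thesis by (simp add: sum.delta)
  qed
  have "(deriv ^^ n) (\<lambda>z. U z * P z - z * (B z * deriv P z)) 0
          = (deriv ^^ n) (\<lambda>z. U z * P z) 0 - (deriv ^^ n) (\<lambda>z. z * (B z * deriv P z)) 0"
    using hol hol_BdP S by (intro higher_deriv_diff) (auto intro: holomorphic_intros)
  also have "\<dots> = (U 0 - of_nat n * B 0) * (deriv ^^ n) P 0"
    unfolding transport source by (simp add: left_diff_distrib)
  finally show ?thesis .
qed

lemma linear_ode_solution_eq_0:
  fixes D :: "real \<Rightarrow> complex" and a :: complex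
  assumes ode: "\<And>s. s \<ge> 0 \<Longrightarrow> (D has_vector_derivative a * D s) (at s within {0..})"
    and D0: "D 0 = 0" and t: "t \<ge> 0"
  shows "D t = 0"
proof -
  define E where "E r = exp (- a * of_real r) * D r" for r
  have "(E has_derivative (\<lambda>h. 0)) (at s within {0..})" if s: "s \<ge> 0" for s
  proof -
    have "((\<lambda>x. exp (- a * x)) has_field_derivative - a * exp (- a * of_real s)) (at (of_real s))"
      by (auto intro!: derivative_eq_intros)
    from has_vector_derivative_real_field [OF this]
    have "((\<lambda>r. exp (- a * of_real r)) has_vector_derivative - a * exp (- a * of_real s))
            (at s within {0..})"
      by (simp add: has_vector_derivative_at_within)
    then have "(E has_vector_derivative exp (- a * of_real s) * (a * D s) - a * exp (- a * of_real s) * D s)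
                 (at s within {0..})"
      unfolding E_def using ode [OF s] by (intro derivative_eq_intros) auto
    then show ?thesis
      by (simp add: has_vector_derivative_def algebra_simps)
  qed
  then have "E t = E 0"
    using has_derivative_zero_constant [of "{0::real..}" E] t by (force simp: convex_real_interval)
  then show ?thesis
    using D0 by (simp add: E_def)
qed

lemma transport_solution_eq_0:
  fixes P B U :: "real \<Rightarrow> complex \<Rightarrow> complex" and b c :: complex
  assumes holP: "\<And>s. s \<ge> 0 \<Longrightarrow> P s holomorphic_on ball 0 1"
    and holB: "\<And>s. s \<ge> 0 \<Longrightarrow> B s holomorphic_on ball 0 1"
    and holU: "\<And>s. s \<ge> 0 \<Longrightarrow> U s holomorphic_on ball 0 1"
    and contP: "continuous_on ({0..} \<times> ball 0 1) (\<lambda>(s, z). P s z)"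
    and contB: "continuous_on ({0..} \<times> ball 0 1) (\<lambda>(s, z). B s z)"
    and contU: "continuous_on ({0..} \<times> ball 0 1) (\<lambda>(s, z). U s z)"
    and B0: "\<And>s. s \<ge> 0 \<Longrightarrow> B s 0 = b" and U0: "\<And>s. s \<ge> 0 \<Longrightarrow> U s 0 = c"
    and pde: "\<And>s z. s \<ge> 0 \<Longrightarrow> z \<in> ball 0 1 \<Longrightarrow>
                ((\<lambda>r. P r z) has_vector_derivative U s z * P s z - z * (B s z * deriv (P s) z))
                  (at s within {0..})"
    and P0: "\<And>z. z \<in> ball 0 1 \<Longrightarrow> P 0 z = 0"
    and t: "t \<ge> 0" and z: "z \<in> ball 0 1"
  shows "P t z = 0"
proof -
  define A where "A s z = U s z * P s z - z * (B s z * deriv (P s) z)" for s z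
  have holA: "A s holomorphic_on ball 0 1" if "s \<ge> 0" for s
    unfolding A_def [abs_def] using holP holB holU holomorphic_deriv [OF holP] that
    by (intro holomorphic_intros) auto
  have sub: "{0..} \<times> ball 0 (1/2) \<subseteq> {0::real..} \<times> ball (0::complex) 1"
    by auto
  have "continuous_on ({0..} \<times> ball 0 (1/2)) (\<lambda>(s, z). deriv (P s) z)"
    using holP contP by (rule continuous_on_deriv_param) auto
  then have contA: "continuous_on ({0..} \<times> ball 0 (1/2)) (\<lambda>(s, z). A s z)"
    using continuous_on_subset [OF contP sub] continuous_on_subset [OF contB sub]
      continuous_on_subset [OF contU sub]
    unfolding A_def case_prod_beta by (intro continuous_intros)
  have Taylor_coeffs_0: "(deriv ^^ n) (P t) 0 = 0" if "t \<ge> 0" for n t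
    using that
  proof (induction n arbitrary: t rule: less_induct)
    case (less n)
    show ?case
    proof (rule linear_ode_solution_eq_0 [where D = "\<lambda>s. (deriv ^^ n) (P s) 0"])
      fix s :: real assume s: "s \<ge> 0"
      have "((\<lambda>s. (deriv ^^ n) (P s) 0) has_vector_derivative (deriv ^^ n) (A s) 0)
              (at s within {0..})"
        by (rule has_vector_derivative_higher_deriv_0_param [OF _ _ _ contA])
           (use s holP holA pde [folded A_def] in \<open>auto simp: convex_real_interval\<close>)
      moreover have "(deriv ^^ n) (A s) 0 = (c - of_nat n * b) * (deriv ^^ n) (P s) 0"
        unfolding A_def using s less.IH B0 U0
        by (subst higher_deriv_transport_operator_0 [OF holB holU holP]) auto
      ultimately show "((\<lambda>s. (deriv ^^ n) (P s) 0) has_vector_derivative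
                         (c - of_nat n * b) * (deriv ^^ n) (P s) 0) (at s within {0..})"
        by simp
    next
      have "(deriv ^^ n) (P 0) 0 = (deriv ^^ n) (\<lambda>z. 0) 0"
        using holP P0 by (intro higher_deriv_transform_within_open [of _ "ball 0 1"]) auto
      then show "(deriv ^^ n) (P 0) 0 = 0"
        by simp
    qed (use less.prems in auto)
  qed
  show ?thesis
    by (rule holomorphic_fun_eq_0_on_ball [OF holP [OF t] z]) (use Taylor_coeffs_0 t in auto)
qed

section \<open>Local inverses and the transform kappa\<close>

lemma local_inverse_at0_exists:
  fixes f :: "complex \<Rightarrow> complex"
  assumes "f analytic_on {0}" "f 0 = 0" "deriv f 0 \<noteq> 0"
  shows "\<exists>g. local_inverse_at0 f g"
proof -
  obtain S where S: "open S" "0 \<in> S" "f holomorphic_on S"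
    using assms(1) analytic_at by blast
  obtain r where r: "r > 0" "open (f ` ball 0 r)" "inj_on f (ball 0 r)"
    using has_complex_derivative_locally_invertible [OF S(3,2,1) assms(3)] by blast
  have "local_inverse_at0 f (inv_into (ball 0 r) f)"
    unfolding local_inverse_at0_def
    by (rule exI [of _ "ball 0 r"], rule exI [of _ "f ` ball 0 r"])
       (use r assms(2) in \<open>auto simp: inv_into_into f_inv_into_f intro!: image_eqI [of 0 f 0]\<close>)
  then show ?thesis
    by blast
qed

lemma local_inverse_at0_tendsto_0:
  fixes f :: "complex \<Rightarrow> complex"
  assumes "f analytic_on {0}" "f 0 = 0" "local_inverse_at0 f g"
  shows "(g \<longlongrightarrow> 0) (at 0)"
proof (rule tendstoI)
  fix e :: real assume "e > 0"
  obtain S where S: "open S" "0 \<in> S" "f holomorphic_on S"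
    using assms(1) analytic_at by blast
  obtain U where U: "open U" "0 \<in> U" "\<forall>z\<in>U. g (f z) = z"
    using assms(3) unfolding local_inverse_at0_def by blast
  define B where "B = ball 0 e \<inter> U \<inter> S"
  have B: "open B" "0 \<in> B"
    using U S \<open>e > 0\<close> by (auto simp: B_def)
  have "inj_on f B"
    by (rule inj_on_inverseI [where g = g]) (use U in \<open>auto simp: B_def\<close>)
  moreover have "f holomorphic_on B"
    using S(3) by (rule holomorphic_on_subset) (auto simp: B_def)
  ultimately have "open (f ` B)"
    using open_mapping_thm3 B(1) by blast
  moreover have "0 \<in> f ` B"
    using B(2) assms(2) by (metis image_eqI)
  ultimately have "\<forall>\<^sub>F w in at 0. w \<in> f ` B"
    by (rule eventually_at_in_open')
  then show "\<forall>\<^sub>F w in at 0. dist (g w) 0 < e"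
    by eventually_elim (use U in \<open>auto simp: B_def\<close>)
qed

lemma kappa_at_0 [simp]: "kappa t 0 = 0"
  by (simp add: kappa_def xi2_def)

lemma kappa_analytic_at_0: "kappa t analytic_on {0}"
  unfolding kappa_def [abs_def] xi2_def by (intro analytic_intros) auto

lemma kappa_has_field_derivative_at_0: "(kappa t has_field_derivative (exp t + 1) / 2) (at 0)"
  unfolding kappa_def [abs_def] xi2_def
  by (rule derivative_eq_intros refl | simp)+ (simp add: field_simps exp_of_real)

lemma exp_add_1_half_nonzero:
  fixes t :: real
  shows "(exp t + 1) / 2 \<noteq> (0 :: complex)"
proof -
  have "Re ((exp t + 1) / 2 :: complex) > 0"
    by (simp add: add_pos_pos)
  then show ?thesis
    by (metis zero_complex.sel(1) less_irrefl)
qed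

lemma exists_local_inverse_kappa: "\<exists>g. local_inverse_at0 (kappa t) g"
proof (rule local_inverse_at0_exists [OF kappa_analytic_at_0 kappa_at_0])
  show "deriv (kappa t) 0 \<noteq> 0"
    unfolding DERIV_imp_deriv [OF kappa_has_field_derivative_at_0] by (rule exp_add_1_half_nonzero)
qed

lemma S_infinity_decomposition:
  fixes w a :: complex
  assumes "w \<noteq> 0" "1 + w \<noteq> 0"
  shows "(w\<^sup>2 + 2 * w - a) / (w * (1 + w)) = (w + 2) / (w + 1) - a / (w * (1 + w))"
  using assms by (simp add: divide_simps power2_eq_square add.commute) (simp add: algebra_simps)

section \<open>The moment generating function\<close>

lemma csqrt_add_1_nonzero: "csqrt w + 1 \<noteq> 0"
proof
  assume "csqrt w + 1 = 0"
  then have "csqrt w = -1"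
    by (simp add: eq_neg_iff_add_eq_0)
  with Re_csqrt [of w] show False
    by simp
qed

lemma one_minus_notin_nonpos_Reals: "(z :: complex) \<in> ball 0 1 \<Longrightarrow> 1 - z \<notin> \<real>\<^sub>\<le>\<^sub>0"
  using complex_Re_le_cmod [of z] by (auto simp: complex_nonpos_Reals_iff)

definition sqrt1m :: "complex \<Rightarrow> complex" where
  "sqrt1m z = csqrt (1 - z)"

definition xi_init :: "complex \<Rightarrow> complex" where
  "xi_init z = (1 - sqrt1m z) / (1 + sqrt1m z)"

lemma sqrt1m_0 [simp]: "sqrt1m 0 = 1"
  by (simp add: sqrt1m_def)

lemma sqrt1m_squared: "sqrt1m z ^ 2 = 1 - z"
  by (simp add: sqrt1m_def)

lemma sqrt1m_nonzero: "z \<in> ball 0 1 \<Longrightarrow> sqrt1m z \<noteq> 0"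
  by (auto simp: sqrt1m_def)

lemma one_add_sqrt1m_nonzero: "1 + sqrt1m z \<noteq> 0"
  using csqrt_add_1_nonzero by (simp add: sqrt1m_def add.commute)

lemma sqrt1m_has_field_derivative:
  "z \<in> ball 0 1 \<Longrightarrow> (sqrt1m has_field_derivative - 1 / (2 * sqrt1m z)) (at z)"
  unfolding sqrt1m_def using one_minus_notin_nonpos_Reals
  by (auto intro!: derivative_eq_intros)

lemma sqrt1m_holomorphic: "sqrt1m holomorphic_on ball 0 1"
  unfolding sqrt1m_def using one_minus_notin_nonpos_Reals
  by (intro holomorphic_intros) auto

lemma xi_init_holomorphic: "xi_init holomorphic_on ball 0 1"
  unfolding xi_init_def [abs_def] using sqrt1m_holomorphic one_add_sqrt1m_nonzero
  by (intro holomorphic_intros) auto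

lemma xi_init_has_field_derivative:
  assumes "z \<in> ball 0 1"
  shows "(xi_init has_field_derivative 1 / (sqrt1m z * (1 + sqrt1m z)\<^sup>2)) (at z)"
proof -
  have "(xi_init has_field_derivative
           (1 / (2 * sqrt1m z) * (1 + sqrt1m z) - (1 - sqrt1m z) * (- 1 / (2 * sqrt1m z)))
             / (1 + sqrt1m z)\<^sup>2) (at z)"
    unfolding xi_init_def [abs_def] using sqrt1m_has_field_derivative [OF assms] one_add_sqrt1m_nonzero
    by (auto intro!: derivative_eq_intros simp: power2_eq_square)
  then show ?thesis
    using sqrt1m_nonzero [OF assms] one_add_sqrt1m_nonzero [of z]
    by (simp add: field_simps power2_eq_square)
qed

lemma xi_init_ode:
  assumes "z \<in> ball 0 1"
  shows "z * sqrt1m z * deriv xi_init z = xi_init z"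
proof -
  define S where "S = sqrt1m z"
  have S: "S \<noteq> 0" "1 + S \<noteq> 0"
    using sqrt1m_nonzero [OF assms] one_add_sqrt1m_nonzero [of z] by (simp_all add: S_def)
  have "z * S * deriv xi_init z = (1 - S\<^sup>2) * S / (S * (1 + S)\<^sup>2)"
    using DERIV_imp_deriv [OF xi_init_has_field_derivative [OF assms]] sqrt1m_squared [of z]
    by (simp add: S_def)
  also have "\<dots> = (1 - S) / (1 + S)"
    using S by (simp add: divide_simps power2_eq_square) (simp add: algebra_simps)
  finally show ?thesis
    by (simp add: S_def xi_init_def)
qed

locale free_jacobi_mgf =
  fixes M :: "real \<Rightarrow> complex \<Rightarrow> complex"
  assumes holo: "\<And>s. s \<ge> 0 \<Longrightarrow> M s holomorphic_on ball 0 1"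
    and cont: "continuous_on ({0..} \<times> ball 0 1) (\<lambda>(s, z). M s z)"
    and init: "\<And>z. z \<in> ball 0 1 \<Longrightarrow> M 0 z = 1 / (1 - z)"
    and pde: "\<And>s z. s \<ge> 0 \<Longrightarrow> z \<in> ball 0 1 \<Longrightarrow>
               ((\<lambda>r. M r z) has_vector_derivative
                  (- (z / 2) * deriv (\<lambda>w. (1 - w) * (M s w)\<^sup>2) z)) (at s within {0..})"
begin

definition U :: "real \<Rightarrow> complex \<Rightarrow> complex" where
  "U t z = sqrt1m z * M t z"

definition defect :: "real \<Rightarrow> complex \<Rightarrow> complex" where
  "defect t z = (U t z - 1) * exp (U t z * of_real t) - xi_init z * (U t z + 1)"

lemma M_at_0:
  assumes "t \<ge> 0"
  shows "M t 0 = 1"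
proof -
  have "((\<lambda>r. M r 0) has_derivative (\<lambda>h. 0)) (at s within {0..})" if "s \<ge> 0" for s
    using pde [OF that, of 0] by (simp add: has_vector_derivative_def)
  then have "M t 0 = M 0 0"
    using has_derivative_zero_constant [of "{0::real..}" "\<lambda>r. M r 0"] assms
    by (force simp: convex_real_interval)
  also have "\<dots> = 1"
    using init [of 0] by simp
  finally show ?thesis .
qed

lemma U_at_0: "t \<ge> 0 \<Longrightarrow> U t 0 = 1"
  by (simp add: U_def M_at_0)

lemma U_holomorphic: "t \<ge> 0 \<Longrightarrow> U t holomorphic_on ball 0 1"
  unfolding U_def [abs_def] using sqrt1m_holomorphic holo by (intro holomorphic_intros)

lemma defect_holomorphic: "t \<ge> 0 \<Longrightarrow> defect t holomorphic_on ball 0 1"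
  unfolding defect_def [abs_def] using U_holomorphic xi_init_holomorphic
  by (intro holomorphic_intros)

lemma U_continuous: "continuous_on ({0..} \<times> ball 0 1) (\<lambda>(s, z). U s z)"
proof -
  have "continuous_on ({0..} \<times> ball 0 1) (\<lambda>(s, z). sqrt1m z)"
    using holomorphic_on_imp_continuous_on [OF sqrt1m_holomorphic] by (rule continuous_on_snd_compose)
  with cont show ?thesis
    unfolding U_def case_prod_beta by (intro continuous_intros)
qed

lemma defect_continuous: "continuous_on ({0..} \<times> ball 0 1) (\<lambda>(s, z). defect s z)"
proof -
  have "continuous_on ({0..} \<times> ball 0 1) (\<lambda>(s, z). xi_init z)"
    using holomorphic_on_imp_continuous_on [OF xi_init_holomorphic] by (rule continuous_on_snd_compose)
  with U_continuous show ?thesis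
    unfolding defect_def case_prod_beta by (intro continuous_intros)
qed

lemma U_has_field_derivative:
  assumes "s \<ge> 0" "z \<in> ball 0 1"
  shows "(U s has_field_derivative - M s z / (2 * sqrt1m z) + sqrt1m z * deriv (M s) z) (at z)"
proof -
  have "(M s has_field_derivative deriv (M s) z) (at z)"
    using holo [OF assms(1)] assms(2) by (intro holomorphic_derivI) auto
  then show ?thesis
    unfolding U_def [abs_def] using sqrt1m_has_field_derivative [OF assms(2)]
    by (auto intro!: derivative_eq_intros)
qed

lemma U_burgers:
  assumes s: "s \<ge> 0" and z: "z \<in> ball 0 1"
  shows "((\<lambda>r. U r z) has_vector_derivative - z * sqrt1m z * U s z * deriv (U s) z)
           (at s within {0..})"
proof -
  define S where "S = sqrt1m z"
  define Mz where "Mz = deriv (M s) z"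
  have "(M s has_field_derivative Mz) (at z)"
    unfolding Mz_def using holo [OF s] z by (intro holomorphic_derivI) auto
  then have "deriv (\<lambda>w. (1 - w) * (M s w)\<^sup>2) z = - (M s z)\<^sup>2 + (1 - z) * (2 * M s z * Mz)"
    by (intro DERIV_imp_deriv) (auto intro!: derivative_eq_intros)
  then have U_t: "((\<lambda>r. U r z) has_vector_derivative
                    S * (- (z / 2) * (- (M s z)\<^sup>2 + (1 - z) * (2 * M s z * Mz)))) (at s within {0..})"
    unfolding U_def S_def using pde [OF s z] by (intro derivative_intros) auto
  have U_z: "deriv (U s) z = - M s z / (2 * S) + S * Mz"
    using DERIV_imp_deriv [OF U_has_field_derivative [OF s z]] by (simp add: S_def Mz_def)
  have "S * (- (z / 2) * (- (M s z)\<^sup>2 + (1 - z) * (2 * M s z * Mz)))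
          = - z * S * U s z * deriv (U s) z"
    unfolding U_z sqrt1m_squared [of z, folded S_def, symmetric]
    using sqrt1m_nonzero [OF z] by (simp add: U_def S_def field_simps power2_eq_square)
  with U_t show ?thesis
    by (simp only: S_def)
qed

lemma defect_pde:
  assumes s: "s \<ge> 0" and z: "z \<in> ball 0 1"
  shows "((\<lambda>r. defect r z) has_vector_derivative
            U s z * defect s z - z * (sqrt1m z * U s z * deriv (defect s) z)) (at s within {0..})"
proof -
  define S where "S = sqrt1m z"
  define u where "u = U s z"
  define Uz where "Uz = deriv (U s) z"
  define E where "E = exp (u * of_real s)"
  define c where "c = xi_init z"
  define c' where "c' = deriv xi_init z"
  have "(U s has_field_derivative Uz) (at z)"
    unfolding Uz_def using U_holomorphic [OF s] z by (intro holomorphic_derivI) auto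
  moreover have "(xi_init has_field_derivative c') (at z)"
    unfolding c'_def using xi_init_holomorphic z by (intro holomorphic_derivI) auto
  ultimately have "(defect s has_field_derivative
                      Uz * E + (u - 1) * (E * (Uz * of_real s)) - (c' * (u + 1) + c * Uz)) (at z)"
    unfolding defect_def [abs_def] u_def E_def c_def by (auto intro!: derivative_eq_intros)
  then have defect_z: "deriv (defect s) z
                         = Uz * E + (u - 1) * (E * (Uz * of_real s)) - (c' * (u + 1) + c * Uz)"
    by (rule DERIV_imp_deriv)
  define Ut where "Ut = - z * S * u * Uz"
  have U_t: "((\<lambda>r. U r z) has_vector_derivative Ut) (at s within {0..})"
    using U_burgers [OF s z] by (simp add: Ut_def S_def u_def Uz_def)
  have "((\<lambda>r. U r z * of_real r) has_vector_derivative Ut * of_real s + u) (at s within {0..})"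
    unfolding u_def using U_t by (auto intro!: derivative_eq_intros)
  then have exp_t: "((\<lambda>r. exp (U r z * of_real r)) has_vector_derivative (Ut * of_real s + u) * E)
                      (at s within {0..})"
    by (rule field_vector_diff_chain_within [where g = exp, unfolded o_def])
       (auto simp: E_def u_def intro: DERIV_exp has_field_derivative_at_within)
  have defect_t: "((\<lambda>r. defect r z) has_vector_derivative
                     Ut * E + (u - 1) * (E * (Ut * of_real s + u)) - c * Ut) (at s within {0..})"
    unfolding defect_def c_def using U_t exp_t
    by (auto intro!: derivative_eq_intros simp: u_def E_def)
  have "c = z * S * c'"
    using xi_init_ode [OF z] by (simp add: c_def S_def c'_def)
  then have "Ut * E + (u - 1) * (E * (Ut * of_real s + u)) - c * Ut
               = U s z * defect s z - z * (sqrt1m z * U s z * deriv (defect s) z)"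
    unfolding defect_z defect_def by (simp add: Ut_def u_def E_def S_def c_def [symmetric] algebra_simps)
  with defect_t show ?thesis
    by simp
qed

lemma defect_at_time_0:
  assumes "z \<in> ball 0 1"
  shows "defect 0 z = 0"
proof -
  have S: "sqrt1m z \<noteq> 0" "1 + sqrt1m z \<noteq> 0"
    using sqrt1m_nonzero [OF assms] one_add_sqrt1m_nonzero by auto
  have "U 0 z = 1 / sqrt1m z"
    using init [OF assms] S by (simp add: U_def flip: sqrt1m_squared) (simp add: power2_eq_square)
  with S show ?thesis
    by (simp add: defect_def xi_init_def field_simps)
qed

lemma defect_eq_0:
  assumes "t \<ge> 0" "z \<in> ball 0 1"
  shows "defect t z = 0"
proof (rule transport_solution_eq_0 [where P = defect and B = "\<lambda>s z. sqrt1m z * U s z" and U = U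
      and b = 1 and c = 1])
  show "continuous_on ({0..} \<times> ball 0 1) (\<lambda>(s, z). sqrt1m z * U s z)"
    using continuous_on_snd_compose [OF holomorphic_on_imp_continuous_on [OF sqrt1m_holomorphic]]
      U_continuous
    unfolding case_prod_beta by (intro continuous_intros)
qed (use assms defect_holomorphic U_holomorphic sqrt1m_holomorphic defect_continuous U_continuous
         U_at_0 defect_pde defect_at_time_0 in \<open>auto intro: holomorphic_intros\<close>)

lemma xi2_U_eq_xi_init:
  assumes "t \<ge> 0" "z \<in> ball 0 1" "U t z + 1 \<noteq> 0"
  shows "xi2 t (U t z) = xi_init z"
proof -
  have "(U t z - 1) * exp (U t z * of_real t) = xi_init z * (U t z + 1)"
    using defect_eq_0 [OF assms(1,2)] by (simp add: defect_def)
  with assms(3) show ?thesis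
    by (simp add: xi2_def field_simps)
qed

lemma M_minus_1_eq_kappa:
  assumes t: "t \<ge> 0" and z: "z \<in> ball 0 1" and Re_U: "Re (U t z) > 0"
  shows "M t z - 1 = kappa t ((1 - z) * (M t z)\<^sup>2 - 1)"
proof -
  define S where "S = sqrt1m z"
  define u where "u = U t z"
  have S: "S \<noteq> 0" "1 + S \<noteq> 0"
    using sqrt1m_nonzero [OF z] one_add_sqrt1m_nonzero by (auto simp: S_def)
  have "Re (u + 1) > 0"
    using Re_U by (simp add: u_def)
  then have u: "u = S * M t z" "u + 1 \<noteq> 0"
    by (auto simp: u_def U_def S_def simp del: plus_complex.sel)
  have "1 + ((1 - z) * (M t z)\<^sup>2 - 1) = u\<^sup>2"
    by (simp add: u power_mult_distrib S_def sqrt1m_squared)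
  \<comment> \<open>\<open>Re u > 0\<close> singles out \<open>u\<close> as the principal square root.\<close>
  then have sqrt_eq: "csqrt (1 + ((1 - z) * (M t z)\<^sup>2 - 1)) = u"
    using Re_U csqrt_square [of u] by (simp add: u_def)
  have xi2_eq: "xi2 t u = (1 - S) / (1 + S)"
    using xi2_U_eq_xi_init [OF t z] u(2) by (simp add: u_def S_def xi_init_def)
  have "kappa t ((1 - z) * (M t z)\<^sup>2 - 1) = ((1 + u) * ((1 - S) / (1 + S)) + (u - 1)) / (1 - (1 - S) / (1 + S))"
    unfolding kappa_def sqrt_eq xi2_eq ..
  also have "\<dots> = M t z - 1"
    using S unfolding u(1) by (simp add: divide_simps) (simp add: algebra_simps)
  finally show ?thesis
    by simp
qed

lemma eventually_M_minus_1_eq_kappa: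
  assumes "t \<ge> 0"
  shows "\<forall>\<^sub>F z in nhds 0. M t z - 1 = kappa t ((1 - z) * (M t z)\<^sup>2 - 1)"
proof -
  have "isCont (U t) 0"
    using holomorphic_on_imp_continuous_on [OF U_holomorphic [OF assms]]
    by (simp add: continuous_on_eq_continuous_at)
  then have "(U t \<longlongrightarrow> U t 0) (nhds 0)"
    by (simp add: isCont_def tendsto_at_iff_tendsto_nhds)
  then have "\<forall>\<^sub>F z in nhds 0. U t z \<in> {w. Re w > 0}"
    by (rule topological_tendstoD) (auto simp: open_halfspace_Re_gt U_at_0 [OF assms])
  moreover have "\<forall>\<^sub>F z in nhds 0. z \<in> ball 0 1"
    by (intro eventually_nhds_in_open) auto
  ultimately show ?thesis
    by eventually_elim (use assms M_minus_1_eq_kappa in auto)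
qed

lemma deriv_M_at_0_nonzero:
  assumes t: "t \<ge> 0"
  shows "deriv (M t) 0 \<noteq> 0"
proof
  define m where "m = deriv (M t) 0"
  define K :: complex where "K = (exp t + 1) / 2"
  assume "m = 0"
  have M_t: "(M t has_field_derivative m) (at 0)"
    unfolding m_def using holo [OF t] by (intro holomorphic_derivI) auto
  then have inner: "((\<lambda>z. (1 - z) * (M t z)\<^sup>2 - 1) has_field_derivative 2 * m - 1) (at 0)"
    by (auto intro!: derivative_eq_intros simp: M_at_0 [OF t])
  have "((\<lambda>z. kappa t ((1 - z) * (M t z)\<^sup>2 - 1)) has_field_derivative K * (2 * m - 1)) (at 0)"
    by (rule DERIV_chain2 [OF _ inner])
       (use kappa_has_field_derivative_at_0 [of t] in \<open>simp add: M_at_0 [OF t] K_def\<close>)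
  then have "((\<lambda>z. M t z - 1) has_field_derivative K * (2 * m - 1)) (at 0)"
    by (subst DERIV_cong_ev [OF refl eventually_M_minus_1_eq_kappa [OF t] refl])
  moreover have "((\<lambda>z. M t z - 1) has_field_derivative m) (at 0)"
    using M_t by (auto intro!: derivative_eq_intros)
  ultimately have "m = K * (2 * m - 1)"
    by (rule DERIV_unique [symmetric])
  moreover have "K \<noteq> 0"
    unfolding K_def by (rule exp_add_1_half_nonzero)
  ultimately show False
    using \<open>m = 0\<close> by simp
qed

lemma exists_local_inverse_M_minus_1:
  assumes "t \<ge> 0"
  shows "\<exists>eta. local_inverse_at0 (\<lambda>z. M t z - 1) eta"
proof (rule local_inverse_at0_exists)
  have "(\<lambda>z. M t z - 1) holomorphic_on ball 0 1"
    using holo [OF assms] by (intro holomorphic_intros)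
  then show "(\<lambda>z. M t z - 1) analytic_on {0}"
    by (rule holomorphic_on_imp_analytic_at) auto
  have "((\<lambda>z. M t z - 1) has_field_derivative deriv (M t) 0) (at 0)"
    using holo [OF assms] by (auto intro!: derivative_eq_intros holomorphic_derivI)
  then show "deriv (\<lambda>z. M t z - 1) 0 \<noteq> 0"
    using deriv_M_at_0_nonzero [OF assms] by (simp add: DERIV_imp_deriv)
qed (simp add: M_at_0 [OF assms])

lemma S_transform_eq:
  assumes t: "t \<ge> 0"
    and eta: "local_inverse_at0 (\<lambda>z. M t z - 1) eta" and g: "local_inverse_at0 (kappa t) g"
  shows "\<forall>\<^sub>F w in at 0. S_transform eta w = (w\<^sup>2 + 2 * w - g w) / (w * (1 + w))"
proof -
  obtain V1 where V1: "open V1" "0 \<in> V1" "\<forall>w\<in>V1. M t (eta w) - 1 = w"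
    using eta unfolding local_inverse_at0_def by blast
  obtain U2 where U2: "open U2" "0 \<in> U2" "\<forall>z\<in>U2. g (kappa t z) = z"
    using g unfolding local_inverse_at0_def by blast
  have eta_0: "(eta \<longlongrightarrow> 0) (at 0)"
    by (rule local_inverse_at0_tendsto_0 [OF _ _ eta])
       (use holo [OF t] M_at_0 [OF t] in \<open>auto intro!: holomorphic_on_imp_analytic_at holomorphic_intros\<close>)
  have "((\<lambda>w. (1 - eta w) * (1 + w)\<^sup>2 - 1) \<longlongrightarrow> (1 - 0) * (1 + 0)\<^sup>2 - 1) (at 0)"
    by (intro tendsto_intros eta_0)
  then have "\<forall>\<^sub>F w in at 0. (1 - eta w) * (1 + w)\<^sup>2 - 1 \<in> U2"
    using U2 by (intro topological_tendstoD) auto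
  moreover have "\<forall>\<^sub>F w in at 0. M t (eta w) - 1 = kappa t ((1 - eta w) * (M t (eta w))\<^sup>2 - 1)"
    using eventually_compose_filterlim [OF eventually_M_minus_1_eq_kappa [OF t] eta_0] .
  moreover have "\<forall>\<^sub>F w in at 0. w \<in> V1 \<inter> ball 0 1 - {0}"
    using V1 by (intro eventually_at_in_open) auto
  ultimately show ?thesis
  proof eventually_elim
    case (elim w)
    define z where "z = eta w"
    have "M t z - 1 = w"
      using V1(3) elim by (simp add: z_def)
    then have "w = kappa t ((1 - z) * (1 + w)\<^sup>2 - 1)"
      using elim(2) by (simp add: z_def algebra_simps)
    then have g_w: "g w = (1 - z) * (1 + w)\<^sup>2 - 1"
      using U2(3) elim(1) by (metis z_def)
    have "w \<noteq> 0" "1 + w \<noteq> 0"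
      using elim(3) by (auto simp: add_eq_0_iff)
    then show ?case
      by (simp add: S_transform_def g_w z_def [symmetric] divide_simps power2_eq_square)
         (simp add: algebra_simps)
  qed
qed

end

theorem mainTheorem3:
  fixes M :: "real \<Rightarrow> complex \<Rightarrow> complex" and t :: real
  assumes t_nonneg: "t \<ge> 0"
    and holo: "\<And>s. s \<ge> 0 \<Longrightarrow> M s holomorphic_on ball 0 1"
    and cont: "continuous_on ({0..} \<times> ball 0 1) (\<lambda>(s, z). M s z)"
    and init: "\<And>z. z \<in> ball 0 1 \<Longrightarrow> M 0 z = 1 / (1 - z)"
    and pde: "\<And>s z. s \<ge> 0 \<Longrightarrow> z \<in> ball 0 1 \<Longrightarrow>
               ((\<lambda>r. M r z) has_vector_derivative
                  (- (z / 2) * deriv (\<lambda>w. (1 - w) * (M s w)\<^sup>2) z)) (at s within {0..})"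
  shows "kappa t 0 = 0
    \<and> (\<exists>g. local_inverse_at0 (kappa t) g)
    \<and> (\<exists>eta. local_inverse_at0 (\<lambda>z. M t z - 1) eta)
    \<and> (\<forall>eta g. local_inverse_at0 (\<lambda>z. M t z - 1) eta \<longrightarrow> local_inverse_at0 (kappa t) g \<longrightarrow>
         (\<forall>\<^sub>F z in at 0.
            S_transform eta z = (z\<^sup>2 + 2 * z - g z) / (z * (1 + z))
          \<and> (z\<^sup>2 + 2 * z - g z) / (z * (1 + z)) = (z + 2) / (z + 1) - g z / (z * (1 + z))))"
proof -
  interpret free_jacobi_mgf M
    using holo cont init pde by unfold_locales
  have "\<forall>\<^sub>F z in at 0.
          S_transform eta z = (z\<^sup>2 + 2 * z - g z) / (z * (1 + z))
        \<and> (z\<^sup>2 + 2 * z - g z) / (z * (1 + z)) = (z + 2) / (z + 1) - g z / (z * (1 + z))"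
    if "local_inverse_at0 (\<lambda>z. M t z - 1) eta" "local_inverse_at0 (kappa t) g" for eta g
  proof -
    have "\<forall>\<^sub>F z in at 0. z \<in> ball 0 1 - {0}"
      by (intro eventually_at_in_open) auto
    with S_transform_eq [OF t_nonneg that] show ?thesis
    proof eventually_elim
      case (elim z)
      then have "z \<noteq> 0" "1 + z \<noteq> 0"
        by (auto simp: add_eq_0_iff)
      with elim(1) show ?case
        by (simp add: S_infinity_decomposition)
    qed
  qed
  then show ?thesis
    using exists_local_inverse_kappa exists_local_inverse_M_minus_1 [OF t_nonneg] by simp
qed

end
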